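(* Let $-1<a<0$ and $\mathbf{g}\in\mathbb{R}^m$. There is a unique $c\in\mathbb{R}$ (with $g_i + c > 0$ for all $i$) such that $\sum_{i=1}^m (g_i+c)^{1/a} = 1$. Furthermore, let $\mathbf{v}\in\Delta^m$ with all $v_i>0$, and $\kappa\ge 0$. Then: (i) if $g_i \le v_i^a + \kappa$ for all $i$, then $c\ge-\kappa$; (ii) if $g_i \ge v_i^a - \frac{\kappa}{v_i}$ for all $i$, then $c \le \frac{\kappa}{\min_i v_i}$; and if, furthermore, $\kappa \le a^2 v_i^{a+1}$ for all $i$, then $c\le m\kappa$.
   Context: $\Delta^m$ is the probability simplex in $\mathbb{R}^m$. *)

theory Defs
  imports Complex_Main
begin

definition prob_simplex :: "('m::finite \<Rightarrow> real) set" where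
  "prob_simplex = {v. (\<forall>i. 0 \<le> v i) \<and> (\<Sum>i\<in>UNIV. v i) = 1}"

end

theory Submission
  imports Defs "HOL-Analysis.Convex"
begin

(* Write p = 1/a < -1.  The map c \<mapsto> \<Sum>i (g i + c) powr p is continuous and strictly
   decreasing on {c. \<forall>i. 0 < g i + c}, large near the left end and small far right, so it
   takes the value 1 exactly once.  Monotonicity also gives a comparison principle: if
   0 < x i \<le> g i + d and \<Sum>i x i powr p \<le> 1 then c \<le> d, and dually.  Bound (i) and the
   first half of (ii) compare with x i = v i powr a, whose p-th powers sum to 1.  For c \<le> m \<kappa>
   compare with x i = v i powr a + m \<kappa> - \<kappa> / v i and show
   x i powr p \<le> v i (1 + t (m - 1 / v i)) with t = \<kappa> m powr a / a; these majorants sum to 1.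
   After rescaling (b = -a, s = m v i, K = \<kappa> m powr (a + 1)) this is
   (1 - K (1 - 1/s) / b) powr (-b) \<le> 1 + K (s powr b - s powr (b - 1)), where the left side is
   convex and the right side affine in K, with equality at K = 0.  So it suffices to treat the
   largest admissible K (b\<^sup>2 for s \<ge> 1, b\<^sup>2 s powr (1 - b) for s \<le> 1), which is done by
   a monotonicity argument in s. *)

definition normalizes :: "real \<Rightarrow> ('m::finite \<Rightarrow> real) \<Rightarrow> real \<Rightarrow> bool" where
  "normalizes p g c \<longleftrightarrow> (\<forall>i. 0 < g i + c) \<and> (\<Sum>i\<in>UNIV. (g i + c) powr p) = 1"

lemma sum_powr_strict_antimono:
  fixes x y :: "'m::finite \<Rightarrow> real"
  assumes "p < 0" "\<And>i. 0 < x i" "\<And>i. x i < y i"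
  shows "(\<Sum>i\<in>UNIV. y i powr p) < (\<Sum>i\<in>UNIV. x i powr p)"
  using assms by (intro sum_strict_mono powr_less_mono2_neg) auto

lemma normalizes_le:
  fixes g x :: "'m::finite \<Rightarrow> real"
  assumes "p < 0" "normalizes p g c" "\<And>i. 0 < x i" "\<And>i. x i \<le> g i + d"
    and "(\<Sum>i\<in>UNIV. x i powr p) \<le> 1"
  shows "c \<le> d"
proof (rule ccontr)
  assume "\<not> c \<le> d"
  then have "x i < g i + c" for i
    using assms(4)[of i] by linarith
  then have "(\<Sum>i\<in>UNIV. (g i + c) powr p) < (\<Sum>i\<in>UNIV. x i powr p)"
    by (intro sum_powr_strict_antimono[OF \<open>p < 0\<close> assms(3)])
  then show False
    using assms(2,5) unfolding normalizes_def by simp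
qed

lemma normalizes_ge:
  fixes g x :: "'m::finite \<Rightarrow> real"
  assumes "p < 0" "normalizes p g c" "\<And>i. g i + d \<le> x i"
    and "1 \<le> (\<Sum>i\<in>UNIV. x i powr p)"
  shows "d \<le> c"
proof (rule ccontr)
  assume "\<not> d \<le> c"
  then have "g i + c < x i" for i
    using assms(3)[of i] by linarith
  then show False
    using sum_powr_strict_antimono[OF \<open>p < 0\<close>, of "\<lambda>i. g i + c" x] assms(2,4)
    unfolding normalizes_def by auto
qed

lemma normalizes_unique:
  assumes "p < 0" "normalizes p g c" "normalizes p g c'"
  shows "c = c'"
  using normalizes_le[OF assms(1,2), of "\<lambda>i. g i + c'" c']
    normalizes_le[OF assms(1,3), of "\<lambda>i. g i + c" c] assms(2,3)
  unfolding normalizes_def by auto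

lemma normalizes_exists:
  fixes g :: "'m::finite \<Rightarrow> real"
  assumes p: "p < 0"
  shows "\<exists>c. normalizes p g c"
proof -
  define F where "F c = (\<Sum>i\<in>UNIV. (g i + c) powr p)" for c
  define N where "N = real (card (UNIV :: 'm set))"
  obtain i0 where i0: "g i0 = Min (range g)"
    by (metis Min_in finite_UNIV finite_imageI imageE image_is_empty UNIV_not_empty)
  \<comment> \<open>At c0 the smallest coordinate alone contributes 1; at c1 each of the N terms is at most 1/N.\<close>
  define c0 where "c0 = 1 - g i0"
  define c1 where "c1 = N powr (-1 / p) - g i0"
  have min: "g i0 \<le> g i" for i
    unfolding i0 by simp
  have N: "1 \<le> N"
    unfolding N_def by (simp add: Suc_le_eq finite_UNIV_card_ge_0)
  then have "1 \<le> N powr (-1 / p)"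
    using p by (intro ge_one_powr_ge_zero) (auto simp: divide_simps)
  then have c01: "c0 \<le> c1"
    unfolding c0_def c1_def by simp
  have pos: "0 < g i + c" if "c0 \<le> c" for i c
    using min[of i] that unfolding c0_def by simp
  have "(g i0 + c0) powr p \<le> F c0"
    unfolding F_def by (rule member_le_sum) auto
  then have "1 \<le> F c0"
    unfolding c0_def by simp
  have "F c1 \<le> (\<Sum>i\<in>(UNIV :: 'm set). (N powr (-1 / p)) powr p)"
    unfolding F_def
    by (intro sum_mono powr_mono2') (use p min \<open>1 \<le> N powr (-1 / p)\<close> in \<open>auto simp: c1_def\<close>)
  also have "\<dots> = N * N powr (-1)"
    using p by (simp add: powr_powr N_def)
  also have "\<dots> = 1"
    using N by (simp add: powr_minus_divide)
  finally have "F c1 \<le> 1" .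
  have "continuous_on {c0..c1} F"
    unfolding F_def
    by (intro continuous_on_sum continuous_intros ballI) (metis atLeastAtMost_iff pos less_irrefl)
  then obtain c where c: "c0 \<le> c" "F c = 1"
    using IVT2'[of F c1 1 c0] \<open>F c1 \<le> 1\<close> \<open>1 \<le> F c0\<close> c01 by auto
  with pos show ?thesis
    unfolding normalizes_def F_def by blast
qed

lemma powr_neg_convex_chord:
  fixes b l x :: real
  assumes "0 \<le> b" "0 \<le> l" "l \<le> 1" "0 < x"
  shows "((1 - l) + l * x) powr (-b) \<le> (1 - l) + l * x powr (-b)"
proof -
  have "1 powr (1 - l) * x powr l \<le> (1 - l) * 1 + l * x"
    by (rule Youngs_inequality_0) (use assms in auto)
  then have "((1 - l) + l * x) powr (-b) \<le> (x powr l) powr (-b)"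
    by (intro powr_mono2') (use assms in auto)
  also have "\<dots> = (x powr (-b)) powr l"
    by (simp add: powr_powr mult.commute)
  also have "\<dots> \<le> (1 - l) * 1 + l * x powr (-b)"
    using Youngs_inequality_0[of "1 - l" l 1 "x powr (-b)"] assms by simp
  finally show ?thesis by simp
qed

lemma convex_combination_pos:
  fixes l x :: real
  assumes "0 \<le> l" "l \<le> 1" "0 < x"
  shows "0 < (1 - l) + l * x"
  using assms by (cases "l = 0") (auto intro: add_nonneg_pos)

lemma large_s_gap_has_derivative:
  fixes b s :: real
  assumes "0 < b" "b < 1" "0 < s"
  shows "((\<lambda>t. b\<^sup>2 * (t powr b - t powr (b - 1)) - (1 - b + b / t) powr (-b))
           has_real_derivative
           b\<^sup>2 * s powr (b - 2) * ((1 - b + b * s) - s / (s * (1 - b) + b) powr (b + 1))) (at s)"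
proof (rule DERIV_cong)
  define P where "P = s * (1 - b) + b"
  have P: "0 < P"
    using assms unfolding P_def by (simp add: add_pos_nonneg)
  have base_eq: "1 - b + b / s = P / s"
    using assms unfolding P_def by (simp add: field_simps)
  have base_pos: "0 < 1 - b + b / s"
    using P base_eq assms by simp
  show "((\<lambda>t. b\<^sup>2 * (t powr b - t powr (b - 1)) - (1 - b + b / t) powr (-b))
           has_real_derivative
           b\<^sup>2 * (b * s powr (b - 1) - (b - 1) * s powr (b - 2))
             - b\<^sup>2 * (1 - b + b / s) powr (-b - 1) / s\<^sup>2) (at s)"
    using base_pos assms
    by (auto intro!: derivative_eq_intros simp: power2_eq_square)
  have "b\<^sup>2 * (1 - b + b / s) powr (-b - 1) / s\<^sup>2 = b\<^sup>2 * s powr (b - 2) * (s / P powr (b + 1))"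
    unfolding base_eq using assms P
    by (simp add: powr_divide powr_minus_divide powr_diff powr_add field_simps power2_eq_square)
  moreover have "b * s powr (b - 1) - (b - 1) * s powr (b - 2) = s powr (b - 2) * (1 - b + b * s)"
    using assms by (simp add: powr_diff field_simps power2_eq_square)
  ultimately show "b\<^sup>2 * (b * s powr (b - 1) - (b - 1) * s powr (b - 2))
             - b\<^sup>2 * (1 - b + b / s) powr (-b - 1) / s\<^sup>2
       = b\<^sup>2 * s powr (b - 2) * ((1 - b + b * s) - s / (s * (1 - b) + b) powr (b + 1))"
    unfolding P_def by (simp add: right_diff_distrib)
qed

lemma large_s_gap_derivative_nonneg:
  fixes b s :: real
  assumes "0 < b" "b < 1" "1 \<le> s"
  shows "s / (s * (1 - b) + b) powr (b + 1) \<le> 1 - b + b * s"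
proof -
  define P where "P = s * (1 - b) + b"
  have "1 * (1 - b) \<le> s * (1 - b)"
    using assms by (intro mult_right_mono) auto
  then have "1 \<le> P"
    unfolding P_def by simp
  then have "P \<le> P powr (b + 1)"
    using powr_mono[of 1 "b + 1" P] assms by simp
  moreover have "s \<le> (1 - b + b * s) * P"
  proof -
    have "(1 - b + b * s) * P - s = b * (1 - b) * (s - 1)\<^sup>2"
      unfolding P_def by (simp add: power2_eq_square algebra_simps)
    moreover have "0 \<le> b * (1 - b) * (s - 1)\<^sup>2" using assms by simp
    ultimately show ?thesis by linarith
  qed
  moreover have "0 \<le> 1 - b + b * s"
    using assms by simp
  ultimately have "s \<le> (1 - b + b * s) * P powr (b + 1)"
    by (meson mult_left_mono order_trans)
  then show ?thesis
    using \<open>1 \<le> P\<close> unfolding P_def[symmetric] by (simp add: divide_simps)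
qed

lemma large_s_endpoint_bound:
  fixes b s :: real
  assumes "0 < b" "b < 1" "1 \<le> s"
  shows "(1 - b + b / s) powr (-b) \<le> 1 + b\<^sup>2 * (s powr b - s powr (b - 1))"
proof -
  let ?gap = "\<lambda>t. b\<^sup>2 * (t powr b - t powr (b - 1)) - (1 - b + b / t) powr (-b)"
  let ?gap' = "\<lambda>t. b\<^sup>2 * t powr (b - 2) * ((1 - b + b * t) - t / (t * (1 - b) + b) powr (b + 1))"
  have "?gap 1 \<le> ?gap s"
  proof (rule deriv_nonneg_imp_mono[where g = ?gap and g' = ?gap'])
    show "(?gap has_real_derivative ?gap' t) (at t)" if "t \<in> {1..s}" for t
      using assms that large_s_gap_has_derivative by auto
    show "0 \<le> ?gap' t" if "t \<in> {1..s}" for t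
      using assms that large_s_gap_derivative_nonneg[of b t] by auto
  qed (use assms in auto)
  then show ?thesis by simp
qed

lemma small_s_gap_has_derivative:
  fixes b s :: real
  assumes "0 < b" "b < 1" "0 < s" "s \<le> 1"
  shows "((\<lambda>t. b\<^sup>2 * t - (1 + b * (t powr (-b) - t powr (1 - b))) powr (-b))
           has_real_derivative
           b\<^sup>2 * (1 - (b + (1 - b) * s) / (s * (1 + b * (s powr (-b) - s powr (1 - b)))) powr (b + 1)))
         (at s)"
proof (rule DERIV_cong)
  define h where "h = 1 + b * (s powr (-b) - s powr (1 - b))"
  have "s powr (1 - b) \<le> s powr (-b)"
    using assms by (intro powr_mono') auto
  then have h: "0 < h"
    using assms unfolding h_def by (simp add: add_pos_nonneg)
  then show "((\<lambda>t. b\<^sup>2 * t - (1 + b * (t powr (-b) - t powr (1 - b))) powr (-b))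
           has_real_derivative
           b\<^sup>2 * 1 - (- b * h powr (- b - 1)) * (b * (- b * s powr (- b - 1) - (1 - b) * s powr (1 - b - 1))))
         (at s)"
    using assms unfolding h_def by (auto intro!: derivative_eq_intros)
  have "h powr (-b - 1) * s powr (-b - 1) = 1 / (s * h) powr (b + 1)"
    using assms h by (simp add: powr_mult powr_minus_divide[of _ "b + 1", simplified])
  moreover have "s powr (1 - b - 1) = s * s powr (-b - 1)"
    using assms by (simp add: powr_diff)
  ultimately show "b\<^sup>2 * 1 - (- b * h powr (- b - 1)) * (b * (- b * s powr (- b - 1) - (1 - b) * s powr (1 - b - 1)))
      = b\<^sup>2 * (1 - (b + (1 - b) * s) / (s * h) powr (b + 1))"
    by (simp add: algebra_simps power2_eq_square add_divide_distrib diff_divide_distrib)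
qed

lemma small_s_gap_derivative_nonpos:
  fixes b s :: real
  assumes "0 < b" "b < 1" "0 < s" "s \<le> 1"
  shows "1 \<le> (b + (1 - b) * s) / (s * (1 + b * (s powr (-b) - s powr (1 - b)))) powr (b + 1)"
proof -
  define H where "H = s * (1 + b * (s powr (-b) - s powr (1 - b)))"
  have "s * s powr (-b) = s powr (1 - b)"
    using powr_add[of s 1 "-b"] assms by simp
  then have H_eq: "H = s + b * s powr (1 - b) * (1 - s)"
    unfolding H_def by (simp add: algebra_simps)
  have "0 < H"
    unfolding H_eq using assms by (simp add: add_pos_nonneg)
  have "s powr (1 - b) \<le> 1"
    using assms by (intro powr_le1) auto
  then have "b * s powr (1 - b) * (1 - s) \<le> b * 1 * (1 - s)"
    using assms by (intro mult_right_mono mult_left_mono) auto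
  then have H_le: "H \<le> b + (1 - b) * s"
    unfolding H_eq by (simp add: algebra_simps)
  have "(1 - b) * s \<le> (1 - b) * 1"
    using assms by (intro mult_left_mono) auto
  then have "H \<le> 1"
    using H_le by simp
  then have "H powr (b + 1) \<le> H"
    using assms \<open>0 < H\<close> by (intro powr_le_one_le) auto
  with \<open>0 < H\<close> H_le show ?thesis
    unfolding H_def[symmetric] by simp
qed

lemma small_s_endpoint_bound:
  fixes b s :: real
  assumes "0 < b" "b < 1" "0 < s" "s \<le> 1"
  shows "(1 + b * (s powr (-b) - s powr (1 - b))) powr (-b) \<le> 1 + b\<^sup>2 * (s - 1)"
proof -
  let ?gap = "\<lambda>t. b\<^sup>2 * t - (1 + b * (t powr (-b) - t powr (1 - b))) powr (-b)"
  let ?gap' = "\<lambda>t. b\<^sup>2 * (1 - (b + (1 - b) * t) / (t * (1 + b * (t powr (-b) - t powr (1 - b)))) powr (b + 1))"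
  have "?gap 1 \<le> ?gap s"
  proof (rule deriv_nonpos_imp_antimono[where g = ?gap and g' = ?gap'])
    show "(?gap has_real_derivative ?gap' t) (at t)" if "t \<in> {s..1}" for t
      using assms that small_s_gap_has_derivative[of b t] by auto
    show "?gap' t \<le> 0" if "t \<in> {s..1}" for t
      using assms that small_s_gap_derivative_nonpos[of b t] by (intro mult_nonneg_nonpos) auto
  qed (use assms in auto)
  then show ?thesis by (simp add: algebra_simps)
qed

lemma perturbed_powr_bound_large_s:
  fixes b s K :: real
  assumes b: "0 < b" "b < 1" and s: "1 \<le> s" and K: "0 \<le> K" "K \<le> b\<^sup>2"
  shows "0 < 1 - K * (1 - 1 / s) / b"
    and "(1 - K * (1 - 1 / s) / b) powr (-b) \<le> 1 + K * (s powr b - s powr (b - 1))"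
proof -
  define l where "l = K / b\<^sup>2"
  define x where "x = 1 - b + b / s"
  have l: "0 \<le> l" "l \<le> 1"
    using K b unfolding l_def by auto
  have x: "0 < x"
    using b s unfolding x_def by (simp add: add_pos_nonneg)
  have eq: "1 - K * (1 - 1 / s) / b = (1 - l) + l * x"
    unfolding l_def x_def using b s by (simp add: field_simps power2_eq_square)
  show "0 < 1 - K * (1 - 1 / s) / b"
    unfolding eq using l x by (rule convex_combination_pos)
  have "(1 - K * (1 - 1 / s) / b) powr (-b) \<le> (1 - l) + l * x powr (-b)"
    unfolding eq using b l x by (intro powr_neg_convex_chord) auto
  also have "\<dots> \<le> (1 - l) + l * (1 + b\<^sup>2 * (s powr b - s powr (b - 1)))"
    using large_s_endpoint_bound[OF b s] l unfolding x_def
    by (intro add_left_mono mult_left_mono) auto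
  also have "\<dots> = 1 + K * (s powr b - s powr (b - 1))"
    unfolding l_def using b by (simp add: field_simps)
  finally show "(1 - K * (1 - 1 / s) / b) powr (-b) \<le> 1 + K * (s powr b - s powr (b - 1))" .
qed

lemma perturbed_powr_bound_small_s:
  fixes b s K :: real
  assumes b: "0 < b" "b < 1" and s: "0 < s" "s \<le> 1" and K: "0 \<le> K" "K \<le> b\<^sup>2 * s powr (1 - b)"
  shows "0 < 1 - K * (1 - 1 / s) / b"
    and "(1 - K * (1 - 1 / s) / b) powr (-b) \<le> 1 + K * (s powr b - s powr (b - 1))"
proof -
  define T where "T = s powr (1 - b)"
  define l where "l = K / (b\<^sup>2 * T)"
  define x where "x = 1 + b * (s powr (-b) - s powr (1 - b))"
  have T: "0 < T"
    using s unfolding T_def by simp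
  have powr_eqs: "s powr (-b) = T / s" "s powr (b - 1) = 1 / T" "s powr b = s / T"
    using s T unfolding T_def by (simp_all add: powr_diff powr_minus_divide field_simps)
  have l: "0 \<le> l" "l \<le> 1"
    using K b T unfolding l_def T_def by auto
  have "s powr (1 - b) \<le> s powr (-b)"
    using s by (intro powr_mono') auto
  then have x: "0 < x"
    using b unfolding x_def by (simp add: add_pos_nonneg)
  have eq: "1 - K * (1 - 1 / s) / b = (1 - l) + l * x"
    unfolding l_def x_def powr_eqs T_def[symmetric] using b s T
    by (simp add: field_simps power2_eq_square)
  show "0 < 1 - K * (1 - 1 / s) / b"
    unfolding eq using l x by (rule convex_combination_pos)
  have "(1 - K * (1 - 1 / s) / b) powr (-b) \<le> (1 - l) + l * x powr (-b)"
    unfolding eq using b l x by (intro powr_neg_convex_chord) auto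
  also have "\<dots> \<le> (1 - l) + l * (1 + b\<^sup>2 * (s - 1))"
    using small_s_endpoint_bound[OF b s] l unfolding x_def
    by (intro add_left_mono mult_left_mono) auto
  also have "\<dots> = 1 + K * (s powr b - s powr (b - 1))"
    unfolding l_def powr_eqs using b T by (simp add: field_simps)
  finally show "(1 - K * (1 - 1 / s) / b) powr (-b) \<le> 1 + K * (s powr b - s powr (b - 1))" .
qed

lemma perturbed_powr_bound:
  fixes b s K :: real
  assumes "0 < b" "b < 1" "0 < s" "0 \<le> K" "K \<le> b\<^sup>2" "K \<le> b\<^sup>2 * s powr (1 - b)"
  shows "0 < 1 - K * (1 - 1 / s) / b"
    and "(1 - K * (1 - 1 / s) / b) powr (-b) \<le> 1 + K * (s powr b - s powr (b - 1))"
  using assms perturbed_powr_bound_large_s[of b s K] perturbed_powr_bound_small_s[of b s K]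
  by (cases "1 \<le> s"; simp)+

(* The substitution b = -a, s = m v, K = k m powr (a + 1) reduces this to perturbed_powr_bound;
   the resulting hypothesis K \<le> b\<^sup>2 is k_m. *)
lemma perturbed_powr_root_bound:
  fixes a m v k :: real
  assumes a: "-1 < a" "a < 0" and m: "0 < m" and v: "0 < v" and k: "0 \<le> k"
    and k_m: "k * m powr (a + 1) \<le> a\<^sup>2" and k_v: "k \<le> a\<^sup>2 * v powr (a + 1)"
  shows "0 < v powr a + m * k - k / v"
    and "(v powr a + m * k - k / v) powr (1 / a) \<le> v * (1 + k * m powr a * (m - 1 / v) / a)"
proof -
  define y where "y = v powr a + m * k - k / v"
  define R where "R = 1 + k * m powr a * (m - 1 / v) / a"
  define K where "K = k * m powr (a + 1)"
  have "m powr (a + 1) * k \<le> m powr (a + 1) * (a\<^sup>2 * v powr (a + 1))"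
    using k_v by (intro mult_left_mono) auto
  also have "\<dots> = (-a)\<^sup>2 * (m * v) powr (1 - (-a))"
    using m v by (simp add: powr_mult mult_ac add.commute)
  finally have K_s: "K \<le> (-a)\<^sup>2 * (m * v) powr (1 - (-a))"
    unfolding K_def by (simp add: mult.commute)
  have m_a: "m powr (a + 1) = m powr a * m"
    using m by (simp add: powr_add)
  have R_eq: "1 - K * (1 - 1 / (m * v)) / (-a) = R"
    unfolding R_def K_def m_a using m v a by (simp add: field_simps)
  have y_eq: "1 + K * ((m * v) powr (-a) - (m * v) powr (-a - 1)) = y / v powr a"
    unfolding K_def y_def using m v
    by (simp add: powr_mult powr_add powr_diff powr_minus_divide field_simps)
  have "0 < R" and "R powr a \<le> y / v powr a"
    using perturbed_powr_bound[of "-a" "m * v" K] a m v k k_m K_s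
    unfolding R_eq y_eq by (auto simp: K_def)
  then have "(v * R) powr a \<le> y"
    using v by (simp add: powr_mult divide_simps mult.commute)
  moreover have "0 < (v * R) powr a"
    using v \<open>0 < R\<close> by simp
  ultimately show "0 < v powr a + m * k - k / v"
    unfolding y_def by linarith
  have "y powr (1 / a) \<le> ((v * R) powr a) powr (1 / a)"
    using a \<open>(v * R) powr a \<le> y\<close> \<open>0 < (v * R) powr a\<close> by (intro powr_mono2') auto
  also have "\<dots> = v * R"
    using a v \<open>0 < R\<close> by (simp add: powr_powr)
  finally show "(v powr a + m * k - k / v) powr (1 / a) \<le> v * (1 + k * m powr a * (m - 1 / v) / a)"
    unfolding y_def R_def .
qed

lemma ex_le_mean:
  fixes v :: "'m::finite \<Rightarrow> real"
  shows "\<exists>j. v j * real (card (UNIV :: 'm set)) \<le> sum v UNIV"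
proof (rule ccontr)
  assume "\<not> ?thesis"
  then have "sum v UNIV < v j * real (card (UNIV :: 'm set))" for j
    by (meson not_le)
  then have "(\<Sum>i\<in>(UNIV :: 'm set). sum v UNIV) < (\<Sum>i\<in>UNIV. v i * real (card (UNIV :: 'm set)))"
    by (intro sum_strict_mono) auto
  then show False
    by (simp add: sum_distrib_right[symmetric] mult.commute)
qed

lemma sum_perturbed_powr_root_le_one:
  fixes a \<kappa> :: real and v :: "'m::finite \<Rightarrow> real"
  defines "N \<equiv> real (card (UNIV :: 'm set))"
  assumes a: "-1 < a" "a < 0" and v: "sum v UNIV = 1" "\<And>i. 0 < v i"
    and \<kappa>: "0 \<le> \<kappa>" "\<And>i. \<kappa> \<le> a\<^sup>2 * v i powr (a + 1)"
  shows "0 < v i powr a + N * \<kappa> - \<kappa> / v i"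
    and "(\<Sum>i\<in>UNIV. (v i powr a + N * \<kappa> - \<kappa> / v i) powr (1 / a)) \<le> 1"
proof -
  have N: "0 < N"
    unfolding N_def by (simp add: finite_UNIV_card_ge_0)
  obtain j where "v j * N \<le> 1"
    using ex_le_mean[of v] v unfolding N_def by auto
  then have "v j powr (a + 1) \<le> (1 / N) powr (a + 1)"
    using a v(2)[of j] N by (intro powr_mono2) (auto simp: field_simps)
  then have "\<kappa> \<le> a\<^sup>2 * (1 / N) powr (a + 1)"
    using \<kappa>(2)[of j] mult_left_mono[of _ _ "a\<^sup>2"] by (meson order_trans zero_le_power2)
  then have \<kappa>_N: "\<kappa> * N powr (a + 1) \<le> a\<^sup>2"
    using N by (simp add: powr_divide divide_simps)
  define t where "t = \<kappa> * N powr a / a"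
  have bound: "0 < v i powr a + N * \<kappa> - \<kappa> / v i"
    "(v i powr a + N * \<kappa> - \<kappa> / v i) powr (1 / a) \<le> v i * (1 + t * (N - 1 / v i))" for i
    using perturbed_powr_root_bound[of a N "v i" \<kappa>] a N v(2) \<kappa> \<kappa>_N
    unfolding t_def by (auto simp: mult.commute mult.left_commute)
  show "0 < v i powr a + N * \<kappa> - \<kappa> / v i"
    by (rule bound(1))
  have "(\<Sum>i\<in>UNIV. (v i powr a + N * \<kappa> - \<kappa> / v i) powr (1 / a)) \<le> (\<Sum>i\<in>UNIV. v i * (1 + t * (N - 1 / v i)))"
    by (intro sum_mono bound)
  also have "\<dots> = (\<Sum>i\<in>UNIV. v i + t * N * v i - t)"
    using v(2) by (intro sum.cong refl) (simp add: field_simps less_imp_neq[symmetric])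
  also have "\<dots> = 1"
    using v(1) by (simp add: sum.distrib sum_subtractf sum_distrib_left[symmetric] N_def)
  finally show "(\<Sum>i\<in>UNIV. (v i powr a + N * \<kappa> - \<kappa> / v i) powr (1 / a)) \<le> 1" .
qed

lemma sum_powr_powr_inverse:
  fixes v :: "'m::finite \<Rightarrow> real"
  assumes "a \<noteq> 0" "\<And>i. 0 < v i"
  shows "(\<Sum>i\<in>UNIV. (v i powr a) powr (1 / a)) = sum v UNIV"
  using assms by (simp add: powr_powr abs_of_pos)

lemma normalizes_lower_bound:
  fixes g v :: "'m::finite \<Rightarrow> real"
  assumes "a < 0" "normalizes (1 / a) g c" "sum v UNIV = 1" "\<And>i. 0 < v i"
    and "\<And>i. g i \<le> v i powr a + \<kappa>"
  shows "- \<kappa> \<le> c"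
proof (rule normalizes_ge[where x = "\<lambda>i. v i powr a"])
  show "g i + - \<kappa> \<le> v i powr a" for i
    using assms(5)[of i] by simp
qed (use assms sum_powr_powr_inverse[of a v] in auto)

lemma normalizes_upper_bound_Min:
  fixes g v :: "'m::finite \<Rightarrow> real"
  assumes "a < 0" "normalizes (1 / a) g c" "sum v UNIV = 1" "\<And>i. 0 < v i" "0 \<le> \<kappa>"
    and "\<And>i. v i powr a - \<kappa> / v i \<le> g i"
  shows "c \<le> \<kappa> / Min (range v)"
proof (rule normalizes_le[where x = "\<lambda>i. v i powr a"])
  show "0 < v i powr a" for i
    using assms(4)[of i] by simp
  fix i
  have "Min (range v) \<in> range v"
    by (rule Min_in) auto
  then have "0 < Min (range v)" "Min (range v) \<le> v i"
    using assms(4) by auto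
  then have "\<kappa> / v i \<le> \<kappa> / Min (range v)"
    using assms(5) by (intro divide_left_mono) auto
  then show "v i powr a \<le> g i + \<kappa> / Min (range v)"
    using assms(6)[of i] by simp
qed (use assms sum_powr_powr_inverse[of a v] in auto)

lemma normalizes_upper_bound_card:
  fixes g v :: "'m::finite \<Rightarrow> real"
  assumes "-1 < a" "a < 0" "normalizes (1 / a) g c" "sum v UNIV = 1" "\<And>i. 0 < v i" "0 \<le> \<kappa>"
    and "\<And>i. v i powr a - \<kappa> / v i \<le> g i" "\<And>i. \<kappa> \<le> a\<^sup>2 * v i powr (a + 1)"
  shows "c \<le> real (card (UNIV :: 'm set)) * \<kappa>"
proof (rule normalizes_le[of "1 / a" g c
      "\<lambda>i. v i powr a + real (card (UNIV :: 'm set)) * \<kappa> - \<kappa> / v i"])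
  show "v i powr a + real (card (UNIV :: 'm set)) * \<kappa> - \<kappa> / v i
      \<le> g i + real (card (UNIV :: 'm set)) * \<kappa>" for i
    using assms(7)[of i] by simp
qed (use assms sum_perturbed_powr_root_le_one[of a v \<kappa>] in auto)

theorem lemma7:
  fixes a :: real and g :: "'m::finite \<Rightarrow> real"
  assumes "-1 < a" and "a < 0"
  shows "(\<exists>!c::real. (\<forall>i. g i + c > 0) \<and> (\<Sum>i\<in>UNIV. (g i + c) powr (1 / a)) = 1)
     \<and> (\<forall>(v::'m \<Rightarrow> real) (\<kappa>::real) (c::real).
          (\<forall>i. g i + c > 0) \<and> (\<Sum>i\<in>UNIV. (g i + c) powr (1 / a)) = 1
          \<and> v \<in> prob_simplex \<and> (\<forall>i. v i > 0) \<and> \<kappa> \<ge> 0 \<longrightarrow>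
            ((\<forall>i. g i \<le> v i powr a + \<kappa>) \<longrightarrow> c \<ge> - \<kappa>)
          \<and> ((\<forall>i. g i \<ge> v i powr a - \<kappa> / v i) \<longrightarrow>
               c \<le> \<kappa> / Min (range v)
             \<and> ((\<forall>i. \<kappa> \<le> a\<^sup>2 * v i powr (a + 1)) \<longrightarrow> c \<le> real (card (UNIV :: 'm set)) * \<kappa>)))"
proof -
  have p: "1 / a < 0"
    using assms by simp
  have "\<exists>!c. normalizes (1 / a) g c"
    using normalizes_exists[OF p] normalizes_unique[OF p] by blast
  moreover have "((\<forall>i. g i \<le> v i powr a + \<kappa>) \<longrightarrow> c \<ge> - \<kappa>)
          \<and> ((\<forall>i. g i \<ge> v i powr a - \<kappa> / v i) \<longrightarrow>
               c \<le> \<kappa> / Min (range v)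
             \<and> ((\<forall>i. \<kappa> \<le> a\<^sup>2 * v i powr (a + 1)) \<longrightarrow> c \<le> real (card (UNIV :: 'm set)) * \<kappa>))"
    if c: "normalizes (1 / a) g c" and v: "v \<in> prob_simplex" "\<forall>i. v i > 0" and \<kappa>: "\<kappa> \<ge> 0"
    for v :: "'m \<Rightarrow> real" and \<kappa> c
  proof (intro conjI impI)
    have sum_v: "sum v UNIV = 1"
      using v(1) unfolding prob_simplex_def by simp
    show "c \<ge> - \<kappa>" if "\<forall>i. g i \<le> v i powr a + \<kappa>"
      by (rule normalizes_lower_bound[OF assms(2) c sum_v]) (use v(2) that in auto)
    show "c \<le> \<kappa> / Min (range v)" if "\<forall>i. g i \<ge> v i powr a - \<kappa> / v i"
      by (rule normalizes_upper_bound_Min[OF assms(2) c sum_v _ \<kappa>]) (use v(2) that in auto)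
    show "c \<le> real (card (UNIV :: 'm set)) * \<kappa>"
      if "\<forall>i. g i \<ge> v i powr a - \<kappa> / v i" "\<forall>i. \<kappa> \<le> a\<^sup>2 * v i powr (a + 1)"
      by (rule normalizes_upper_bound_card[OF assms c sum_v _ \<kappa>]) (use v(2) that in auto)
  qed
  ultimately show ?thesis
    unfolding normalizes_def by blast
qed

end
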